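(* Let $N\ge 1$, $1\le m\le N$, $\alpha>0$, let $V$ be a real symmetric positive definite $N\times N$ matrix, and let $$A=\begin{pmatrix}0&E\\-V&-\alpha D\end{pmatrix},$$ where $E$ is the $N\times N$ identity matrix and $D$ is the diagonal $N\times N$ matrix with $D_{k,k}=1$ for $k=N-m+1,\dots,N$ and $D_{k,k}=0$ otherwise. Let $H(\psi)=\frac12\sum_{i=1}^N p_i^2+\frac12\sum_{i,j}V(j,i)q_iq_j$ for $\psi=(q,p)\in\mathbb{R}^{2N}$, and let $L_-=\{\psi\in\mathbb{R}^{2N}: H(e^{tA}\psi)\to0 \text{ as } t\to\infty\}$. Then the spectrum of the restriction $A_-$ of $A$ to $L_-$ lies in the open left half-plane, and $\|e^{tA_-}\|_2\to0$ exponentially fast as $t\to\infty$.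
   Context: Points of $\mathbb{R}^{2N}$ are written as column vectors $\psi=(q,p)$ with $q=(q_1,\dots,q_N)^T$, $p=(p_1,\dots,p_N)^T$. It is known (and used here) that $L_-$ is a linear subspace of $\mathbb{R}^{2N}$ invariant under $A$, so $A_-$ is a well-defined linear operator on $L_-$. $\|\cdot\|_2$ is the operator norm induced by the Euclidean norm. *)

theory Defs
  imports Complex_Main "Jordan_Normal_Form.Matrix"
begin

text \<open>Coordinates of \<psi> = (q,p) in R^(2N), 0-based: q_i = \<psi>$i, p_i = \<psi>$(N+i), i < N.\<close>

definition damp_mat :: "nat \<Rightarrow> nat \<Rightarrow> real mat" where
  "damp_mat N m = mat N N (\<lambda>(i,j). if i = j \<and> N - m \<le> i then 1 else 0)"

definition sys_mat :: "nat \<Rightarrow> nat \<Rightarrow> real \<Rightarrow> real mat \<Rightarrow> real mat" where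
  "sys_mat N m \<alpha> V = four_block_mat (0\<^sub>m N N) (1\<^sub>m N) (- V) (- (\<alpha> \<cdot>\<^sub>m damp_mat N m))"

definition symmetric_posdef :: "nat \<Rightarrow> real mat \<Rightarrow> bool" where
  "symmetric_posdef N V \<longleftrightarrow> V \<in> carrier_mat N N \<and> transpose_mat V = V \<and>
     (\<forall>x \<in> carrier_vec N. x \<noteq> 0\<^sub>v N \<longrightarrow> (\<Sum>i<N. \<Sum>j<N. x $ i * V $$ (i,j) * x $ j) > 0)"

definition exp_mat_vec :: "real mat \<Rightarrow> real \<Rightarrow> real vec \<Rightarrow> real vec" where
  "exp_mat_vec A t x = vec (dim_vec x) (\<lambda>i. \<Sum>k. (t ^ k / fact k) * ((A ^\<^sub>m k) *\<^sub>v x) $ i)"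

definition energy :: "nat \<Rightarrow> real mat \<Rightarrow> real vec \<Rightarrow> real" where
  "energy N V \<psi> = (1/2) * (\<Sum>i<N. (\<psi> $ (N + i))\<^sup>2)
     + (1/2) * (\<Sum>i<N. \<Sum>j<N. V $$ (j,i) * \<psi> $ i * \<psi> $ j)"

definition L_minus :: "nat \<Rightarrow> nat \<Rightarrow> real \<Rightarrow> real mat \<Rightarrow> real vec set" where
  "L_minus N m \<alpha> V = {\<psi> \<in> carrier_vec (2*N).
     ((\<lambda>t. energy N V (exp_mat_vec (sys_mat N m \<alpha> V) t \<psi>)) \<longlongrightarrow> 0) at_top}"

definition eucl_norm :: "real vec \<Rightarrow> real" where
  "eucl_norm x = sqrt (\<Sum>i<dim_vec x. (x $ i)\<^sup>2)"

text \<open>Spectrum of the restriction of a real matrix A (n x n) to an A-invariant real subspace L: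
  the eigenvalues of its complexification L + iL.\<close>
definition restr_spectrum :: "nat \<Rightarrow> real mat \<Rightarrow> real vec set \<Rightarrow> complex set" where
  "restr_spectrum n A L = {c. \<exists>z \<in> carrier_vec n. z \<noteq> 0\<^sub>v n
      \<and> vec n (\<lambda>i. Re (z $ i)) \<in> L \<and> vec n (\<lambda>i. Im (z $ i)) \<in> L
      \<and> map_mat complex_of_real A *\<^sub>v z = c \<cdot>\<^sub>v z}"

definition restr_exp_norm :: "real mat \<Rightarrow> real vec set \<Rightarrow> real \<Rightarrow> real" where
  "restr_exp_norm A L t = Sup {eucl_norm (exp_mat_vec A t \<psi>) | \<psi>. \<psi> \<in> L \<and> eucl_norm \<psi> \<le> 1}"

end

theory Submission
  imports Defs "HOL-Analysis.Function_Topology" "Jordan_Normal_Form.Char_Poly"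
begin

text \<open>The energy \<open>H\<close> is nonincreasing along the flow, since \<open>dH/dt = -\<alpha> \<Sum> p\<^sub>k\<^sup>2\<close> over the damped
  momenta, and it is comparable to \<open>|\<psi>|\<^sup>2\<close> because \<open>V\<close> is positive definite. So \<open>H(e\<^sup>t\<^sup>A \<psi>)\<close>
  converges for every \<open>\<psi>\<close>; being a quadratic form in \<open>\<psi>\<close>, its coefficients converge too
  (polarization), and the convergence is uniform on the unit sphere. On \<open>L\<^sub>-\<close> the limit form
  vanishes, so after some time \<open>T\<close> every \<open>\<psi> \<in> L\<^sub>-\<close> has lost all but a fraction \<open>1/e\<close> of its
  energy. As \<open>L\<^sub>-\<close> is invariant under the flow this iterates to
  \<open>H(e\<^sup>t\<^sup>A \<psi>) \<le> e H(\<psi>) e\<^sup>-\<^sup>t\<^sup>/\<^sup>T\<close>, which gives the exponential bound on \<open>e\<^sup>t\<^sup>A\<close> restricted to \<open>L\<^sub>-\<close>.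

  For the spectrum: if \<open>Az = cz\<close> with \<open>Re z, Im z \<in> L\<^sub>-\<close>, the flow multiplies \<open>z\<close> by \<open>e\<^sup>c\<^sup>t\<close>, so
  \<open>|e\<^sup>t\<^sup>A Re z|\<^sup>2 + |e\<^sup>t\<^sup>A Im z|\<^sup>2 = |e\<^sup>c\<^sup>t|\<^sup>2 |z|\<^sup>2\<close>; this tends to \<open>0\<close> only if \<open>Re c < 0\<close>.\<close>

section \<open>Matrix exponential\<close>

lemma index_mult_mat_sum:
  assumes "A \<in> carrier_mat n n" "B \<in> carrier_mat n n" "i < n" "j < n"
  shows "(A * B) $$ (i,j) = (\<Sum>l<n. A $$ (i,l) * B $$ (l,j))"
  using assms by (simp add: scalar_prod_def atLeast0LessThan)

lemma index_mult_mat_vec_sum: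
  assumes "A \<in> carrier_mat n n" "x \<in> carrier_vec n" "i < n"
  shows "(A *\<^sub>v x) $ i = (\<Sum>l<n. A $$ (i,l) * x $ l)"
  using assms by (simp add: scalar_prod_def atLeast0LessThan)

lemma pow_mat_add:
  assumes A: "A \<in> carrier_mat n n"
  shows "A ^\<^sub>m (p + q) = A ^\<^sub>m p * A ^\<^sub>m q"
proof (induction q)
  case 0
  then show ?case using A by simp
next
  case (Suc q)
  have "A ^\<^sub>m (p + Suc q) = (A ^\<^sub>m p * A ^\<^sub>m q) * A" using Suc by simp
  also have "\<dots> = A ^\<^sub>m p * (A ^\<^sub>m q * A)"
    using A by (intro assoc_mult_mat) auto
  finally show ?case by simp
qed

lemma pow_mat_Suc_left:
  assumes "A \<in> carrier_mat n n"
  shows "A ^\<^sub>m Suc k = A * A ^\<^sub>m k"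
  using pow_mat_add[OF assms, of 1 k] assms by simp

lemma pow_mat_index_bound:
  fixes A :: "real mat"
  assumes A: "A \<in> carrier_mat n n"
  obtains M where "M \<ge> 1" "\<And>k i j. i < n \<Longrightarrow> j < n \<Longrightarrow> \<bar>(A ^\<^sub>m k) $$ (i,j)\<bar> \<le> M ^ k"
proof -
  define M where "M = 1 + (\<Sum>j<n. \<Sum>l<n. \<bar>A $$ (l,j)\<bar>)"
  have "0 \<le> (\<Sum>j<n. \<Sum>l<n. \<bar>A $$ (l,j)\<bar>)" by (intro sum_nonneg) auto
  hence M1: "M \<ge> 1" unfolding M_def by simp
  have column_bound: "(\<Sum>l<n. \<bar>A $$ (l,j)\<bar>) \<le> M" if "j < n" for j
  proof -
    have "(\<Sum>l<n. \<bar>A $$ (l,j)\<bar>) \<le> (\<Sum>j<n. \<Sum>l<n. \<bar>A $$ (l,j)\<bar>)"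
      using that by (intro member_le_sum) (auto simp: sum_nonneg)
    thus ?thesis unfolding M_def by simp
  qed
  have "\<bar>(A ^\<^sub>m k) $$ (i,j)\<bar> \<le> M ^ k" if "i < n" "j < n" for k i j
    using that
  proof (induction k arbitrary: i j)
    case 0
    then show ?case using A by simp
  next
    case (Suc k)
    have "(A ^\<^sub>m Suc k) $$ (i,j) = (\<Sum>l<n. (A ^\<^sub>m k) $$ (i,l) * A $$ (l,j))"
      using A Suc.prems by (simp only: pow_mat.simps) (rule index_mult_mat_sum, auto)
    hence "\<bar>(A ^\<^sub>m Suc k) $$ (i,j)\<bar> \<le> (\<Sum>l<n. \<bar>(A ^\<^sub>m k) $$ (i,l)\<bar> * \<bar>A $$ (l,j)\<bar>)"
      by (auto intro: order.trans[OF sum_abs] simp: abs_mult)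
    also have "\<dots> \<le> (\<Sum>l<n. M ^ k * \<bar>A $$ (l,j)\<bar>)"
      using Suc by (intro sum_mono mult_right_mono) auto
    also have "\<dots> = M ^ k * (\<Sum>l<n. \<bar>A $$ (l,j)\<bar>)" by (simp add: sum_distrib_left)
    also have "\<dots> \<le> M ^ k * M"
      using column_bound[OF Suc.prems(2)] M1 by (intro mult_left_mono) auto
    finally show ?case by (simp add: mult.commute)
  qed
  thus ?thesis using M1 that by blast
qed

definition mat_exp :: "real mat \<Rightarrow> real \<Rightarrow> real mat" where
  "mat_exp A t = mat (dim_row A) (dim_col A) (\<lambda>(i,j). \<Sum>k. t^k / fact k * (A ^\<^sub>m k) $$ (i,j))"

lemma summable_abs_mat_exp_series:
  fixes A :: "real mat"
  assumes A: "A \<in> carrier_mat n n" and ij: "i < n" "j < n"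
  shows "summable (\<lambda>k. \<bar>t^k / fact k * (A ^\<^sub>m k) $$ (i,j)\<bar>)"
proof -
  obtain M where M: "M \<ge> 1" "\<And>k i j. i < n \<Longrightarrow> j < n \<Longrightarrow> \<bar>(A ^\<^sub>m k) $$ (i,j)\<bar> \<le> M ^ k"
    using pow_mat_index_bound[OF A] by blast
  have "norm \<bar>t^k / fact k * (A ^\<^sub>m k) $$ (i,j)\<bar> \<le> inverse (fact k) * (\<bar>t\<bar> * M)^k" for k
  proof -
    have "\<bar>t^k / fact k * (A ^\<^sub>m k) $$ (i,j)\<bar> = \<bar>t\<bar>^k / fact k * \<bar>(A ^\<^sub>m k) $$ (i,j)\<bar>"
      by (simp add: abs_mult power_abs)
    also have "\<dots> \<le> \<bar>t\<bar>^k / fact k * M^k"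
      using M(2)[OF ij] by (intro mult_left_mono) auto
    finally show ?thesis by (simp add: power_mult_distrib divide_inverse mult_ac)
  qed
  with summable_exp show ?thesis by (rule summable_comparison_test'[where N=0])
qed

lemma summable_mat_exp_series:
  fixes A :: "real mat"
  assumes "A \<in> carrier_mat n n" "i < n" "j < n"
  shows "summable (\<lambda>k. t^k / fact k * (A ^\<^sub>m k) $$ (i,j))"
  using summable_rabs_cancel[OF summable_abs_mat_exp_series[OF assms]] .

lemma dim_mat_exp [simp]: "dim_row (mat_exp A t) = dim_row A" "dim_col (mat_exp A t) = dim_col A"
  unfolding mat_exp_def by auto

lemma mat_exp_carrier [simp]: "A \<in> carrier_mat n n \<Longrightarrow> mat_exp A t \<in> carrier_mat n n"
  unfolding mat_exp_def by auto

lemma index_mat_exp: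
  "A \<in> carrier_mat n n \<Longrightarrow> i < n \<Longrightarrow> j < n \<Longrightarrow>
   mat_exp A t $$ (i,j) = (\<Sum>k. t^k / fact k * (A ^\<^sub>m k) $$ (i,j))"
  unfolding mat_exp_def by auto

lemma exp_mat_vec_eq_mat_exp:
  assumes A: "A \<in> carrier_mat n n" and x: "x \<in> carrier_vec n"
  shows "exp_mat_vec A t x = mat_exp A t *\<^sub>v x"
proof (rule eq_vecI)
  show "dim_vec (exp_mat_vec A t x) = dim_vec (mat_exp A t *\<^sub>v x)"
    using A x by (simp add: exp_mat_vec_def)
  fix i assume "i < dim_vec (mat_exp A t *\<^sub>v x)"
  hence i: "i < n" using A by simp
  have "exp_mat_vec A t x $ i = (\<Sum>k. \<Sum>l<n. t ^ k / fact k * (A ^\<^sub>m k) $$ (i,l) * x $ l)"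
    using i x
    by (simp add: exp_mat_vec_def index_mult_mat_vec_sum[OF pow_carrier_mat[OF A] x i]
        sum_distrib_left sum_divide_distrib mult.assoc)
  also have "\<dots> = (\<Sum>l<n. \<Sum>k. t ^ k / fact k * (A ^\<^sub>m k) $$ (i,l) * x $ l)"
    by (rule suminf_sum) (intro summable_mult2 summable_mat_exp_series[OF A i], auto)
  also have "\<dots> = (\<Sum>l<n. mat_exp A t $$ (i,l) * x $ l)"
    using suminf_mult2[OF summable_mat_exp_series[OF A i]] index_mat_exp[OF A i]
    by (intro sum.cong) auto
  also have "\<dots> = (mat_exp A t *\<^sub>v x) $ i"
    using index_mult_mat_vec_sum[OF mat_exp_carrier[OF A] x i] by simp
  finally show "exp_mat_vec A t x $ i = (mat_exp A t *\<^sub>v x) $ i" .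
qed

lemma mat_exp_zero:
  fixes A :: "real mat"
  assumes A: "A \<in> carrier_mat n n"
  shows "mat_exp A 0 = 1\<^sub>m n"
proof (rule eq_matI)
  fix i j assume "i < dim_row (1\<^sub>m n :: real mat)" "j < dim_col (1\<^sub>m n :: real mat)"
  hence i: "i < n" and j: "j < n" by auto
  have "mat_exp A 0 $$ (i,j) = (\<Sum>k. ((A ^\<^sub>m k) $$ (i,j) / fact k) * 0 ^ k)"
    using A i j by (simp add: index_mat_exp mult.commute)
  also have "\<dots> = (A ^\<^sub>m 0) $$ (i,j) / fact 0" by (rule powser_zero)
  finally show "mat_exp A 0 $$ (i,j) = 1\<^sub>m n $$ (i,j)" using A i j by simp
qed (use A in auto)

lemma mat_exp_add:
  fixes A :: "real mat"
  assumes A: "A \<in> carrier_mat n n"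
  shows "mat_exp A (s + t) = mat_exp A s * mat_exp A t"
proof (rule eq_matI)
  fix i j assume "i < dim_row (mat_exp A s * mat_exp A t)" "j < dim_col (mat_exp A s * mat_exp A t)"
  hence i: "i < n" and j: "j < n" using A by auto
  define a where "a l k = s^k / fact k * (A ^\<^sub>m k) $$ (i,l)" for l k
  define b where "b l k = t^k / fact k * (A ^\<^sub>m k) $$ (l,j)" for l k
  have na: "summable (\<lambda>k. norm (a l k))" if "l < n" for l
    unfolding a_def real_norm_def using summable_abs_mat_exp_series[OF A i that] .
  have nb: "summable (\<lambda>k. norm (b l k))" if "l < n" for l
    unfolding b_def real_norm_def using summable_abs_mat_exp_series[OF A that j] .
  have Cauchy_coeff: "(\<Sum>l<n. \<Sum>p\<le>k. a l p * b l (k-p)) = (s+t)^k / fact k * (A ^\<^sub>m k) $$ (i,j)"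
    for k
  proof -
    have "(\<Sum>l<n. \<Sum>p\<le>k. a l p * b l (k-p))
        = (\<Sum>p\<le>k. s^p / fact p * (t^(k-p) / fact (k-p))
             * (\<Sum>l<n. (A ^\<^sub>m p) $$ (i,l) * (A ^\<^sub>m (k-p)) $$ (l,j)))"
      unfolding a_def b_def by (subst sum.swap) (simp add: sum_distrib_left mult_ac)
    also have "\<dots> = (\<Sum>p\<le>k. s^p / fact p * (t^(k-p) / fact (k-p)) * (A ^\<^sub>m k) $$ (i,j))"
    proof (intro sum.cong refl)
      fix p assume "p \<in> {..k}"
      hence "A ^\<^sub>m k = A ^\<^sub>m p * A ^\<^sub>m (k-p)" using pow_mat_add[OF A, of p "k-p"] by simp
      thus "s^p / fact p * (t^(k-p) / fact (k-p)) * (\<Sum>l<n. (A ^\<^sub>m p) $$ (i,l) * (A ^\<^sub>m (k-p)) $$ (l,j))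
          = s^p / fact p * (t^(k-p) / fact (k-p)) * (A ^\<^sub>m k) $$ (i,j)"
        using A i j index_mult_mat_sum[of "A ^\<^sub>m p" n "A ^\<^sub>m (k-p)" i j] by simp
    qed
    also have "\<dots> = (s+t)^k / fact k * (A ^\<^sub>m k) $$ (i,j)"
    proof -
      have "(s+t)^k / fact k = (\<Sum>p\<le>k. s^p / fact p * (t^(k-p) / fact (k-p)))"
        using exp_series_add_commuting[of s t k] by (simp add: divide_inverse mult_ac)
      thus ?thesis by (simp add: sum_distrib_right)
    qed
    finally show ?thesis .
  qed
  have "(mat_exp A s * mat_exp A t) $$ (i,j) = (\<Sum>l<n. mat_exp A s $$ (i,l) * mat_exp A t $$ (l,j))"
    using A i j by (intro index_mult_mat_sum) auto
  also have "\<dots> = (\<Sum>l<n. (\<Sum>k. a l k) * (\<Sum>k. b l k))"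
    using A i j by (simp add: index_mat_exp a_def b_def)
  also have "\<dots> = (\<Sum>l<n. \<Sum>k. \<Sum>p\<le>k. a l p * b l (k-p))"
    by (intro sum.cong refl Cauchy_product na nb) auto
  also have "\<dots> = (\<Sum>k. \<Sum>l<n. \<Sum>p\<le>k. a l p * b l (k-p))"
    by (rule suminf_sum[symmetric], rule sums_summable, rule Cauchy_product_sums) (use na nb in auto)
  also have "\<dots> = mat_exp A (s+t) $$ (i,j)"
    using A i j by (simp add: Cauchy_coeff index_mat_exp)
  finally show "mat_exp A (s+t) $$ (i,j) = (mat_exp A s * mat_exp A t) $$ (i,j)" ..
qed (auto simp: mat_exp_def)

lemma mat_exp_add_mult_vec:
  fixes A :: "real mat"
  assumes "A \<in> carrier_mat n n" "x \<in> carrier_vec n"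
  shows "mat_exp A (s + t) *\<^sub>v x = mat_exp A s *\<^sub>v (mat_exp A t *\<^sub>v x)"
  using assms by (simp add: mat_exp_add assoc_mult_mat_vec[of _ n n _ n])

lemma has_real_derivative_index_mat_exp:
  fixes A :: "real mat"
  assumes A: "A \<in> carrier_mat n n" and i: "i < n" and j: "j < n"
  shows "((\<lambda>t. mat_exp A t $$ (i,j)) has_real_derivative (A * mat_exp A t) $$ (i,j)) (at t)"
proof -
  define c where "c k = (A ^\<^sub>m k) $$ (i,j) / fact k" for k
  have power_series: "(\<lambda>t. mat_exp A t $$ (i,j)) = (\<lambda>t. \<Sum>k. c k * t^k)"
    using A i j by (auto simp: index_mat_exp c_def intro!: ext arg_cong[where f=suminf])
  have "summable (\<lambda>k. c k * y^k)" for y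
    using summable_mat_exp_series[OF A i j, of y] by (simp add: c_def mult.commute)
  hence "((\<lambda>t. \<Sum>k. c k * t^k) has_real_derivative (\<Sum>k. diffs c k * t^k)) (at t)"
    by (rule termdiffs_strong_converges_everywhere)
  moreover have "(\<Sum>k. diffs c k * t^k) = (\<Sum>k. \<Sum>l<n. A $$ (i,l) * (t^k / fact k * (A ^\<^sub>m k) $$ (l,j)))"
  proof (rule arg_cong[where f=suminf], rule ext)
    fix k
    have "diffs c k = (A ^\<^sub>m Suc k) $$ (i,j) / fact k"
      unfolding diffs_def c_def fact_Suc by (simp del: of_nat_Suc)
    also have "(A ^\<^sub>m Suc k) $$ (i,j) = (\<Sum>l<n. A $$ (i,l) * (A ^\<^sub>m k) $$ (l,j))"
      using A i j by (simp only: pow_mat_Suc_left[OF A]) (rule index_mult_mat_sum, auto)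
    finally show "diffs c k * t^k = (\<Sum>l<n. A $$ (i,l) * (t^k / fact k * (A ^\<^sub>m k) $$ (l,j)))"
      by (simp add: sum_distrib_left sum_divide_distrib sum_distrib_right mult_ac)
  qed
  moreover have "\<dots> = (\<Sum>l<n. \<Sum>k. A $$ (i,l) * (t^k / fact k * (A ^\<^sub>m k) $$ (l,j)))"
    by (rule suminf_sum, rule summable_mult, rule summable_mat_exp_series[OF A _ j]) auto
  moreover have "\<dots> = (\<Sum>l<n. A $$ (i,l) * mat_exp A t $$ (l,j))"
    using A j suminf_mult[OF summable_mat_exp_series[OF A _ j]] by (simp add: index_mat_exp)
  moreover have "\<dots> = (A * mat_exp A t) $$ (i,j)"
    using A i j by (intro index_mult_mat_sum[symmetric]) auto
  ultimately show ?thesis unfolding power_series by simp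
qed

lemma has_real_derivative_mat_exp_mult_vec:
  fixes A :: "real mat"
  assumes A: "A \<in> carrier_mat n n" and x: "x \<in> carrier_vec n" and i: "i < n"
  shows "((\<lambda>t. (mat_exp A t *\<^sub>v x) $ i) has_real_derivative (A *\<^sub>v (mat_exp A t *\<^sub>v x)) $ i) (at t)"
proof -
  have entries: "(B *\<^sub>v x) $ i = (\<Sum>j<n. B $$ (i,j) * x $ j)" if "B \<in> carrier_mat n n" for B
    using that x i by (rule index_mult_mat_vec_sum)
  have "((\<lambda>t. \<Sum>j<n. mat_exp A t $$ (i,j) * x $ j) has_real_derivative
      (\<Sum>j<n. (A * mat_exp A t) $$ (i,j) * x $ j)) (at t)"
    by (intro DERIV_sum DERIV_cmult_right has_real_derivative_index_mat_exp[OF A i]) auto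
  moreover have "A *\<^sub>v (mat_exp A t *\<^sub>v x) = (A * mat_exp A t) *\<^sub>v x"
    using A x by (intro assoc_mult_mat_vec[symmetric]) auto
  ultimately show ?thesis
    using A by (simp only: entries mat_exp_carrier mult_carrier_mat)
qed

lemma exp_mat_vec_eigenvector_linear_part:
  fixes A :: "real mat" and f :: "complex \<Rightarrow> real"
  assumes A: "A \<in> carrier_mat n n" and ev: "eigenvector (map_mat complex_of_real A) z c"
    and f: "bounded_linear f"
  shows "exp_mat_vec A t (vec n (\<lambda>i. f (z $ i))) = vec n (\<lambda>i. f (exp (c * t) * z $ i))"
proof (rule eq_vecI)
  interpret f: bounded_linear f by (rule f)
  have z: "z \<in> carrier_vec n" using ev A unfolding eigenvector_def by simp
  fix i assume "i < dim_vec (vec n (\<lambda>i. f (exp (c * t) * z $ i)))"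
  hence i: "i < n" by simp
  have power_action: "(A ^\<^sub>m k *\<^sub>v vec n (\<lambda>i. f (z $ i))) $ i = f (c^k * z $ i)" for k
  proof -
    have "c^k * z $ i = (map_mat complex_of_real (A ^\<^sub>m k) *\<^sub>v z) $ i"
      using eigenvector_pow[of "map_mat complex_of_real A" n z c k] ev A z i
      by (simp add: of_real_hom.mat_hom_pow[OF A])
    also have "\<dots> = (\<Sum>l<n. (A ^\<^sub>m k) $$ (i,l) *\<^sub>R z $ l)"
      using A z i by (subst index_mult_mat_vec_sum[of _ n]) (auto simp: scaleR_conv_of_real)
    finally have "f (c^k * z $ i) = (\<Sum>l<n. (A ^\<^sub>m k) $$ (i,l) * f (z $ l))"
      by (simp add: f.sum f.scaleR)
    moreover have "(A ^\<^sub>m k *\<^sub>v vec n (\<lambda>i. f (z $ i))) $ i = (\<Sum>l<n. (A ^\<^sub>m k) $$ (i,l) * f (z $ l))"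
      using A i by (subst index_mult_mat_vec_sum[of _ n]) auto
    ultimately show ?thesis by simp
  qed
  have exp_series: "(\<lambda>k. (c * t)^k /\<^sub>R fact k * z $ i) sums (exp (c * t) * z $ i)"
    by (intro sums_mult2 exp_converges)
  have series_term: "f ((c * t)^k /\<^sub>R fact k * z $ i) = t^k / fact k * f (c^k * z $ i)" for k
  proof -
    have "(c * t)^k /\<^sub>R fact k * z $ i = (t^k / fact k) *\<^sub>R (c^k * z $ i)"
      by (simp add: power_mult_distrib scaleR_conv_of_real divide_inverse mult_ac)
    thus ?thesis by (simp add: f.scaleR)
  qed
  have "(\<lambda>k. t^k / fact k * f (c^k * z $ i)) sums f (exp (c * t) * z $ i)"
    using f.sums[OF exp_series] by (simp only: series_term)
  thus "exp_mat_vec A t (vec n (\<lambda>i. f (z $ i))) $ i = vec n (\<lambda>i. f (exp (c * t) * z $ i)) $ i"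
    using i by (simp add: exp_mat_vec_def power_action sums_iff)
qed (simp add: exp_mat_vec_def)

lemma exp_mat_vec_eigenvector_sum_squares:
  fixes A :: "real mat"
  assumes A: "A \<in> carrier_mat n n" and eigen: "eigenvector (map_mat complex_of_real A) z c"
  shows "(\<Sum>k<n. (exp_mat_vec A t (vec n (\<lambda>i. Re (z $ i))) $ k)\<^sup>2)
       + (\<Sum>k<n. (exp_mat_vec A t (vec n (\<lambda>i. Im (z $ i))) $ k)\<^sup>2)
       = (cmod (exp (c * t)))\<^sup>2 * (\<Sum>k<n. (cmod (z $ k))\<^sup>2)"
proof -
  have "(\<Sum>k<n. (exp_mat_vec A t (vec n (\<lambda>i. Re (z $ i))) $ k)\<^sup>2)
      + (\<Sum>k<n. (exp_mat_vec A t (vec n (\<lambda>i. Im (z $ i))) $ k)\<^sup>2)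
      = (\<Sum>k<n. (Re (exp (c * t) * z $ k))\<^sup>2 + (Im (exp (c * t) * z $ k))\<^sup>2)"
    unfolding exp_mat_vec_eigenvector_linear_part[OF A eigen bounded_linear_Re]
      exp_mat_vec_eigenvector_linear_part[OF A eigen bounded_linear_Im] sum.distrib[symmetric]
    by (intro sum.cong refl) simp
  also have "\<dots> = (cmod (exp (c * t)))\<^sup>2 * (\<Sum>k<n. (cmod (z $ k))\<^sup>2)"
    unfolding sum_distrib_left
    by (intro sum.cong refl) (simp only: cmod_power2[symmetric] norm_mult power_mult_distrib)
  finally show ?thesis .
qed

section \<open>Quadratic forms\<close>

definition quad_form :: "nat \<Rightarrow> (nat \<Rightarrow> nat \<Rightarrow> real) \<Rightarrow> real vec \<Rightarrow> real" where
  "quad_form n K x = (\<Sum>k<n. \<Sum>l<n. x $ k * x $ l * K k l)"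

lemma quad_form_symmetrize:
  "quad_form n K x = quad_form n (\<lambda>k l. (K k l + K l k) / 2) x"
proof -
  have "(\<Sum>k<n. \<Sum>l<n. x $ k * x $ l * K l k) = quad_form n K x"
    unfolding quad_form_def by (subst sum.swap) (simp add: mult_ac)
  moreover have "quad_form n (\<lambda>k l. (K k l + K l k) / 2) x
      = (quad_form n K x + (\<Sum>k<n. \<Sum>l<n. x $ k * x $ l * K l k)) / 2"
    unfolding quad_form_def
    by (simp add: add_divide_distrib sum.distrib sum_divide_distrib ring_distribs)
  ultimately show ?thesis by simp
qed

lemma quad_form_diff:
  "quad_form n K x - quad_form n K' x = quad_form n (\<lambda>k l. K k l - K' k l) x"
  unfolding quad_form_def by (simp add: sum_subtractf right_diff_distrib)

lemma quad_form_polarization: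
  assumes k: "k < n" and l: "l < n"
  shows "quad_form n K (unit_vec n k + unit_vec n l) - quad_form n K (unit_vec n k)
           - quad_form n K (unit_vec n l) = K k l + K l k"
proof -
  have unit: "quad_form n K (unit_vec n i) = K i i" if "i < n" for i
  proof -
    have "quad_form n K (unit_vec n i) = (\<Sum>k<n. if k = i then K i i else 0)"
      unfolding quad_form_def using that by (intro sum.cong refl) (auto simp: if_distrib[of "\<lambda>y. y * _"] cong: if_cong)
    thus ?thesis using that by simp
  qed
  have "quad_form n K (unit_vec n k + unit_vec n l)
      = (\<Sum>a<n. \<Sum>b<n. ((if a = k then 1 else 0) + (if a = l then 1 else 0))
                        * ((if b = k then 1 else 0) + (if b = l then 1 else 0)) * K a b)"
    unfolding quad_form_def using k l by (intro sum.cong refl) auto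
  also have "\<dots> = K k k + K k l + K l k + K l l"
  proof -
    have delta: "(\<Sum>a<n. \<Sum>b<n. if a = i then if b = j then c else 0 else 0) = c"
      if "i < n" "j < n" for i j and c :: real
    proof -
      have "(\<Sum>a<n. \<Sum>b<n. if a = i then if b = j then c else 0 else 0)
          = (\<Sum>a<n. if a = i then c else 0)"
        using that by (intro sum.cong refl) auto
      thus ?thesis using that by simp
    qed
    show ?thesis
      using k l by (simp add: ring_distribs sum.distrib if_distrib[of "\<lambda>x. x * _"] delta cong: if_cong)
  qed
  finally show ?thesis using unit k l by simp
qed

lemma tendsto_quad_form:
  assumes "\<And>k l. k < n \<Longrightarrow> l < n \<Longrightarrow> ((\<lambda>t. K t k l) \<longlongrightarrow> L k l) F"
  shows "((\<lambda>t. quad_form n (K t) x) \<longlongrightarrow> quad_form n L x) F"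
  unfolding quad_form_def using assms by (intro tendsto_sum tendsto_mult_left) auto

lemma quad_form_le_of_coeff_bound:
  assumes "\<And>k l. k < n \<Longrightarrow> l < n \<Longrightarrow> \<bar>K k l\<bar> \<le> \<epsilon>"
  shows "quad_form n K x \<le> n * \<epsilon> * (\<Sum>k<n. (x $ k)\<^sup>2)"
proof -
  have "quad_form n K x \<le> (\<Sum>k<n. \<Sum>l<n. ((x $ k)\<^sup>2 + (x $ l)\<^sup>2) / 2 * \<epsilon>)"
    unfolding quad_form_def
  proof (intro sum_mono)
    fix k l assume "k \<in> {..<n}" "l \<in> {..<n}"
    hence K: "\<bar>K k l\<bar> \<le> \<epsilon>" using assms by simp
    have "x $ k * x $ l * K k l \<le> \<bar>x $ k * x $ l\<bar> * \<bar>K k l\<bar>"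
      by (metis abs_ge_self abs_mult)
    also have "\<dots> \<le> ((x $ k)\<^sup>2 + (x $ l)\<^sup>2) / 2 * \<epsilon>"
    proof (intro mult_mono K)
      show "\<bar>x $ k * x $ l\<bar> \<le> ((x $ k)\<^sup>2 + (x $ l)\<^sup>2) / 2"
        using sum_squares_bound[of "x $ k" "x $ l"] sum_squares_bound[of "- x $ k" "x $ l"]
        by (simp add: abs_if)
    qed auto
    finally show "x $ k * x $ l * K k l \<le> ((x $ k)\<^sup>2 + (x $ l)\<^sup>2) / 2 * \<epsilon>" .
  qed
  also have "\<dots> = n * \<epsilon> * (\<Sum>k<n. (x $ k)\<^sup>2)"
    by (simp add: add_divide_distrib sum.distrib sum_divide_distrib[symmetric]
        sum_distrib_left[symmetric] sum_distrib_right[symmetric])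
  finally show ?thesis .
qed

lemma sum_swap_pairs:
  "(\<Sum>a\<in>A. \<Sum>b\<in>B. \<Sum>k\<in>C. \<Sum>l\<in>D. f a b k l) = (\<Sum>k\<in>C. \<Sum>l\<in>D. \<Sum>a\<in>A. \<Sum>b\<in>B. f a b k l)"
proof -
  have "(\<Sum>a\<in>A. \<Sum>b\<in>B. \<Sum>k\<in>C. \<Sum>l\<in>D. f a b k l) = (\<Sum>a\<in>A. \<Sum>k\<in>C. \<Sum>b\<in>B. \<Sum>l\<in>D. f a b k l)"
    by (rule sum.cong[OF refl], rule sum.swap)
  also have "\<dots> = (\<Sum>a\<in>A. \<Sum>k\<in>C. \<Sum>l\<in>D. \<Sum>b\<in>B. f a b k l)"
    by (rule sum.cong[OF refl], rule sum.cong[OF refl], rule sum.swap)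
  also have "\<dots> = (\<Sum>k\<in>C. \<Sum>a\<in>A. \<Sum>l\<in>D. \<Sum>b\<in>B. f a b k l)"
    by (rule sum.swap)
  also have "\<dots> = (\<Sum>k\<in>C. \<Sum>l\<in>D. \<Sum>a\<in>A. \<Sum>b\<in>B. f a b k l)"
    by (rule sum.cong[OF refl], rule sum.swap)
  finally show ?thesis .
qed

lemma quad_form_mult_mat_vec:
  assumes E: "E \<in> carrier_mat n n" and x: "x \<in> carrier_vec n"
  shows "quad_form n K (E *\<^sub>v x)
    = quad_form n (\<lambda>k l. \<Sum>a<n. \<Sum>b<n. E $$ (a,k) * E $$ (b,l) * K a b) x"
proof -
  have "quad_form n K (E *\<^sub>v x)
      = (\<Sum>a<n. \<Sum>b<n. \<Sum>k<n. \<Sum>l<n. x $ k * x $ l * (E $$ (a,k) * E $$ (b,l) * K a b))"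
    unfolding quad_form_def
  proof (intro sum.cong refl)
    fix a b assume "a \<in> {..<n}" "b \<in> {..<n}"
    hence ea: "(E *\<^sub>v x) $ a = (\<Sum>k<n. E $$ (a,k) * x $ k)"
      and eb: "(E *\<^sub>v x) $ b = (\<Sum>l<n. E $$ (b,l) * x $ l)"
      using index_mult_mat_vec_sum[OF E x] by auto
    show "(E *\<^sub>v x) $ a * (E *\<^sub>v x) $ b * K a b
        = (\<Sum>k<n. \<Sum>l<n. x $ k * x $ l * (E $$ (a,k) * E $$ (b,l) * K a b))"
      unfolding ea eb sum_product by (simp add: sum_distrib_left mult_ac)
  qed
  also have "\<dots> = (\<Sum>k<n. \<Sum>l<n. \<Sum>a<n. \<Sum>b<n. x $ k * x $ l * (E $$ (a,k) * E $$ (b,l) * K a b))"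
    by (rule sum_swap_pairs)
  finally show ?thesis
    unfolding quad_form_def by (simp add: sum_distrib_left)
qed

lemma quad_form_coeff_convergent:
  fixes K :: "real \<Rightarrow> nat \<Rightarrow> nat \<Rightarrow> real"
  assumes conv: "\<And>x. x \<in> carrier_vec n \<Longrightarrow> \<exists>L. ((\<lambda>t. quad_form n (K t) x) \<longlongrightarrow> L) at_top"
    and "k < n" "l < n"
  shows "\<exists>L. ((\<lambda>t. (K t k l + K t l k) / 2) \<longlongrightarrow> L) at_top"
proof -
  define e where "e k = (unit_vec n k :: real vec)" for k
  obtain L1 L2 L3 where "((\<lambda>t. quad_form n (K t) (e k + e l)) \<longlongrightarrow> L1) at_top"
    "((\<lambda>t. quad_form n (K t) (e k)) \<longlongrightarrow> L2) at_top" "((\<lambda>t. quad_form n (K t) (e l)) \<longlongrightarrow> L3) at_top"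
    using conv[of "e k + e l"] conv[of "e k"] conv[of "e l"] by (auto simp: e_def)
  hence "((\<lambda>t. (quad_form n (K t) (e k + e l) - quad_form n (K t) (e k) - quad_form n (K t) (e l)) / 2)
      \<longlongrightarrow> (L1 - L2 - L3) / 2) at_top"
    by (intro tendsto_intros) auto
  thus ?thesis unfolding e_def quad_form_polarization[OF assms(2,3)] by blast
qed

text \<open>Pointwise convergence of the forms gives convergence of their (symmetrized) coefficients, hence
  convergence that is uniform on the unit sphere; on the forms tending to zero the limit vanishes.\<close>

lemma quad_form_eventually_small:
  fixes K :: "real \<Rightarrow> nat \<Rightarrow> nat \<Rightarrow> real"
  assumes conv: "\<And>x. x \<in> carrier_vec n \<Longrightarrow> \<exists>L. ((\<lambda>t. quad_form n (K t) x) \<longlongrightarrow> L) at_top"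
    and \<epsilon>: "\<epsilon> > 0"
  obtains T where "\<And>t x. T \<le> t \<Longrightarrow> x \<in> carrier_vec n \<Longrightarrow>
      ((\<lambda>t. quad_form n (K t) x) \<longlongrightarrow> 0) at_top \<Longrightarrow> quad_form n (K t) x \<le> \<epsilon> * (\<Sum>k<n. (x $ k)\<^sup>2)"
proof -
  define S where "S t k l = (K t k l + K t l k) / 2" for t k l
  obtain S_inf where S_lim: "\<And>k l. k < n \<Longrightarrow> l < n \<Longrightarrow> ((\<lambda>t. S t k l) \<longlongrightarrow> S_inf k l) at_top"
    using quad_form_coeff_convergent[OF conv] unfolding S_def by metis
  define \<delta> where "\<delta> = \<epsilon> / (n + 1)"
  have \<delta>: "\<delta> > 0" "n * \<delta> \<le> \<epsilon>"
    using \<epsilon> by (auto simp: \<delta>_def field_simps)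
  have "eventually (\<lambda>t. \<forall>p\<in>{..<n}\<times>{..<n}. \<bar>S t (fst p) (snd p) - S_inf (fst p) (snd p)\<bar> < \<delta>) at_top"
    using S_lim \<delta>(1) unfolding tendsto_iff dist_real_def by (intro eventually_ball_finite) auto
  then obtain T where T: "\<And>t k l. T \<le> t \<Longrightarrow> k < n \<Longrightarrow> l < n \<Longrightarrow> \<bar>S t k l - S_inf k l\<bar> < \<delta>"
    unfolding eventually_at_top_linorder by force
  show thesis
  proof (rule that)
    fix t x assume t: "T \<le> t" and x: "x \<in> carrier_vec n"
      and lim0: "((\<lambda>t. quad_form n (K t) x) \<longlongrightarrow> 0) at_top"
    have K_S: "quad_form n (K t) x = quad_form n (S t) x" for t
      unfolding S_def by (rule quad_form_symmetrize)
    have "((\<lambda>t. quad_form n (K t) x) \<longlongrightarrow> quad_form n S_inf x) at_top"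
      unfolding K_S by (rule tendsto_quad_form) (rule S_lim)
    with lim0 have "quad_form n S_inf x = 0"
      using tendsto_unique trivial_limit_at_top_linorder by blast
    hence "quad_form n (K t) x = quad_form n (\<lambda>k l. S t k l - S_inf k l) x"
      by (simp add: K_S quad_form_diff[symmetric])
    also have "\<dots> \<le> n * \<delta> * (\<Sum>k<n. (x $ k)\<^sup>2)"
      using T[OF t] by (intro quad_form_le_of_coeff_bound less_imp_le)
    also have "\<dots> \<le> \<epsilon> * (\<Sum>k<n. (x $ k)\<^sup>2)"
      using \<delta>(2) by (intro mult_right_mono sum_nonneg) auto
    finally show "quad_form n (K t) x \<le> \<epsilon> * (\<Sum>k<n. (x $ k)\<^sup>2)" .
  qed
qed

text \<open>Vectors of \<open>\<real>\<^sup>N\<close> are modelled as functions \<open>nat \<Rightarrow> real\<close> vanishing from \<open>N\<close> on, so that the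
  unit sphere is a compact subset of the product topology.\<close>

lemma compact_sphere_initial_coordinates:
  "compact {x::nat\<Rightarrow>real. (\<forall>i. x i \<in> (if i < N then {-1..1} else {0})) \<and> (\<Sum>i<N. (x i)\<^sup>2) = 1}"
proof -
  have "compact (PiE UNIV (\<lambda>i. if i < N then {-1..1::real} else {0}))"
    unfolding compactin_euclidean_iff[symmetric]
    by (subst euclidean_product_topology[symmetric], subst compactin_PiE) auto
  moreover have "closed {x::nat\<Rightarrow>real. (\<Sum>i<N. (x i)\<^sup>2) = 1}"
    by (intro closed_Collect_eq continuous_intros) (auto simp: continuous_on_product_coordinates)
  ultimately have "compact (PiE UNIV (\<lambda>i. if i < N then {-1..1::real} else {0})
      \<inter> {x::nat\<Rightarrow>real. (\<Sum>i<N. (x i)\<^sup>2) = 1})"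
    by (rule compact_Int_closed)
  also have "PiE UNIV (\<lambda>i. if i < N then {-1..1::real} else {0}) \<inter> {x. (\<Sum>i<N. (x i)\<^sup>2) = 1}
     = {x::nat\<Rightarrow>real. (\<forall>i. x i \<in> (if i < N then {-1..1} else {0})) \<and> (\<Sum>i<N. (x i)\<^sup>2) = 1}"
    by (auto simp: PiE_def Pi_def)
  finally show ?thesis .
qed

lemma symmetric_posdef_lower_bound:
  assumes "symmetric_posdef N V" "1 \<le> N"
  obtains \<mu> where "\<mu> > 0"
    "\<And>x. x \<in> carrier_vec N \<Longrightarrow> \<mu> * (\<Sum>i<N. (x $ i)\<^sup>2) \<le> (\<Sum>i<N. \<Sum>j<N. x $ i * V $$ (i,j) * x $ j)"
proof -
  define S where "S = {x::nat\<Rightarrow>real. (\<forall>i. x i \<in> (if i < N then {-1..1} else {0})) \<and> (\<Sum>i<N. (x i)\<^sup>2) = 1}"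
  define f where "f y = (\<Sum>i<N. \<Sum>j<N. y i * V $$ (i,j) * y j)" for y :: "nat \<Rightarrow> real"
  have "(\<lambda>i. if i = 0 then 1 else 0::real) \<in> S"
    using assms(2) by (auto simp: S_def if_distrib[where f="\<lambda>x. x^2"] cong: if_cong)
  moreover have "continuous_on S f" unfolding f_def
    by (intro continuous_intros continuous_on_subset[OF continuous_on_product_coordinates]) auto
  ultimately obtain y0 where y0: "y0 \<in> S" "\<And>y. y \<in> S \<Longrightarrow> f y0 \<le> f y"
    using continuous_attains_inf[OF compact_sphere_initial_coordinates[of N, folded S_def]] by blast
  have f_vec: "f y = (\<Sum>i<N. \<Sum>j<N. vec N y $ i * V $$ (i,j) * vec N y $ j)" for y
    unfolding f_def by (intro sum.cong refl) auto
  have "vec N y0 \<noteq> 0\<^sub>v N"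
  proof
    assume "vec N y0 = 0\<^sub>v N"
    hence "\<And>i. i < N \<Longrightarrow> y0 i = 0" by (metis index_vec index_zero_vec(1))
    with y0(1) show False by (auto simp: S_def)
  qed
  hence "f y0 > 0"
    using assms(1) unfolding f_vec symmetric_posdef_def by auto
  moreover have "f y0 * (\<Sum>i<N. (x $ i)\<^sup>2) \<le> (\<Sum>i<N. \<Sum>j<N. x $ i * V $$ (i,j) * x $ j)" for x :: "real vec"
  proof (cases "(\<Sum>i<N. (x $ i)\<^sup>2) = 0")
    case True
    thus ?thesis by (simp add: sum_nonneg_eq_0_iff)
  next
    case False
    define r where "r = sqrt (\<Sum>i<N. (x $ i)\<^sup>2)"
    have r0: "r > 0" using False unfolding r_def by (simp add: sum_nonneg order_le_neq_trans)
    have r2: "r^2 = (\<Sum>i<N. (x $ i)\<^sup>2)" unfolding r_def by (simp add: sum_nonneg)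
    have "\<bar>x $ i\<bar> \<le> r" if "i < N" for i
      unfolding r_def using that by (intro real_le_rsqrt) (auto simp: power2_abs intro!: member_le_sum)
    hence "(\<lambda>i. if i < N then x $ i / r else 0) \<in> S" using r0 unfolding S_def
      by (auto simp: divide_simps r2[symmetric] power_divide sum_divide_distrib[symmetric] abs_le_iff minus_le_iff)
    hence "f y0 \<le> f (\<lambda>i. if i < N then x $ i / r else 0)" by (rule y0(2))
    also have "\<dots> = (\<Sum>i<N. \<Sum>j<N. x $ i * V $$ (i,j) * x $ j) / r^2"
      unfolding f_def by (simp add: sum_divide_distrib power2_eq_square)
    finally show ?thesis using r0 by (simp add: r2[symmetric] field_simps)
  qed
  ultimately show thesis using that by blast
qed

lemma antimono_convergent_at_top:
  fixes f :: "real \<Rightarrow> real"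
  assumes antimono: "\<And>s t. s \<le> t \<Longrightarrow> f t \<le> f s" and bounded: "\<And>t. b \<le> f t"
  shows "\<exists>L. (f \<longlongrightarrow> L) at_top"
proof -
  have bdd: "bdd_below (range f)" using bounded by (intro bdd_belowI) auto
  have "(f \<longlongrightarrow> Inf (range f)) at_top"
  proof (rule decreasing_tendsto)
    show "\<forall>\<^sub>F t in at_top. Inf (range f) \<le> f t"
      using bdd by (auto intro!: always_eventually cInf_lower)
    fix x assume "Inf (range f) < x"
    then obtain t0 where "f t0 < x" using cInf_lessD[of "range f" x] by auto
    thus "\<forall>\<^sub>F t in at_top. f t < x"
      unfolding eventually_at_top_linorder using antimono by (meson le_less_trans)
  qed
  thus ?thesis by blast
qed

lemma exp_decay_of_periodic_contraction:
  fixes f :: "real \<Rightarrow> real"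
  assumes T: "T > 0" and f0: "0 \<le> f 0"
    and antimono: "\<And>s t. 0 \<le> s \<Longrightarrow> s \<le> t \<Longrightarrow> f t \<le> f s"
    and contraction: "\<And>t. 0 \<le> t \<Longrightarrow> f (t + T) \<le> exp (-1) * f t"
    and t: "0 \<le> t"
  shows "f t \<le> exp 1 * f 0 * exp (- t / T)"
proof -
  have periods: "f (k * T) \<le> exp (- k) * f 0" for k :: nat
  proof (induction k)
    case (Suc k)
    have "f (Suc k * T) \<le> exp (-1) * f (k * T)"
      using contraction[of "k * T"] T by (simp add: algebra_simps)
    also have "\<dots> \<le> exp (-1) * (exp (- k) * f 0)"
      using Suc by (intro mult_left_mono) auto
    finally show ?case by (simp add: mult.assoc[symmetric] exp_add[symmetric])
  qed simp
  define k where "k = nat \<lfloor>t / T\<rfloor>"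
  have k: "real k = \<lfloor>t / T\<rfloor>" unfolding k_def using t T by simp
  have "real k * T \<le> t"
    using of_int_floor_le[of "t / T"] T unfolding k[symmetric] by (simp add: field_simps)
  hence "f t \<le> f (k * T)" using T by (intro antimono) auto
  also have "\<dots> \<le> exp (- k) * f 0" by (rule periods)
  also have "\<dots> \<le> exp (1 - t / T) * f 0"
    using real_of_int_floor_gt_diff_one[of "t / T"] f0 unfolding k[symmetric]
    by (intro mult_right_mono) auto
  finally show ?thesis by (simp add: exp_diff exp_minus field_simps)
qed

section \<open>Energy of the damped system\<close>

lemma sum_lessThan_double:
  fixes f :: "nat \<Rightarrow> 'a::comm_monoid_add"
  shows "(\<Sum>j<2*N. f j) = (\<Sum>j<N. f j) + (\<Sum>j<N. f (N+j))"
proof -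
  have "(\<Sum>j<2*N. f j) = (\<Sum>j<N. f j) + (\<Sum>j\<in>{N..<2*N}. f j)"
    by (simp add: lessThan_atLeast0 sum.atLeastLessThan_concat)
  also have "(\<Sum>j\<in>{N..<2*N}. f j) = (\<Sum>j<N. f (N+j))"
    using sum.shift_bounds_nat_ivl[of f 0 N N] by (simp add: lessThan_atLeast0 mult_2 add.commute)
  finally show ?thesis .
qed

lemma sys_mat_carrier: "V \<in> carrier_mat N N \<Longrightarrow> sys_mat N m \<alpha> V \<in> carrier_mat (2*N) (2*N)"
  unfolding sys_mat_def damp_mat_def by (auto simp: mult_2)

lemma index_sys_mat:
  assumes "V \<in> carrier_mat N N" "i < 2*N" "j < 2*N"
  shows "sys_mat N m \<alpha> V $$ (i,j) =
    (if i < N then (if j < N then 0 else if j - N = i then 1 else 0)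
     else if j < N then - V $$ (i-N, j)
     else - (\<alpha> * (if i - N = j - N \<and> N - m \<le> i - N then 1 else 0)))"
  using assms unfolding sys_mat_def damp_mat_def by (simp add: mult_2)

lemma sys_mat_mult_vec_position:
  assumes V: "V \<in> carrier_mat N N" and x: "x \<in> carrier_vec (2*N)" and i: "i < N"
  shows "(sys_mat N m \<alpha> V *\<^sub>v x) $ i = x $ (N+i)"
proof -
  have "(sys_mat N m \<alpha> V *\<^sub>v x) $ i = (\<Sum>l<2*N. sys_mat N m \<alpha> V $$ (i,l) * x $ l)"
    using sys_mat_carrier[OF V] x i by (intro index_mult_mat_vec_sum) auto
  also have "\<dots> = (\<Sum>l<N. if l = i then x $ (N+l) else 0)"
    using i V by (simp add: sum_lessThan_double index_sys_mat if_distrib[of "\<lambda>x. x * _"] cong: if_cong)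
  finally show ?thesis using i by simp
qed

lemma sys_mat_mult_vec_momentum:
  assumes V: "V \<in> carrier_mat N N" and x: "x \<in> carrier_vec (2*N)" and i: "i < N"
  shows "(sys_mat N m \<alpha> V *\<^sub>v x) $ (N+i) =
     - (\<Sum>j<N. V $$ (i,j) * x $ j) - \<alpha> * (if N - m \<le> i then 1 else 0) * x $ (N+i)"
proof -
  have "(sys_mat N m \<alpha> V *\<^sub>v x) $ (N+i) = (\<Sum>l<2*N. sys_mat N m \<alpha> V $$ (N+i,l) * x $ l)"
    using sys_mat_carrier[OF V] x i by (intro index_mult_mat_vec_sum) auto
  also have "\<dots> = (\<Sum>l<N. - V $$ (i,l) * x $ l)
      + (\<Sum>l<N. if l = i then - (\<alpha> * (if N - m \<le> i then 1 else 0)) * x $ (N+l) else 0)"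
    using i V by (simp add: sum_lessThan_double index_sys_mat if_distrib[of "\<lambda>x. x * _"]
        if_distrib[of "\<lambda>x. _ * x"] if_distrib[of uminus] cong: if_cong)
  finally show ?thesis using i by (simp add: sum_negf)
qed

lemma has_real_derivative_energy:
  assumes d: "\<And>i. i < 2*N \<Longrightarrow> ((\<lambda>t. y t $ i) has_real_derivative d i) (at t)"
  shows "((\<lambda>t. energy N V (y t)) has_real_derivative
     (\<Sum>i<N. y t $ (N+i) * d (N+i))
     + (1/2) * (\<Sum>i<N. \<Sum>j<N. V $$ (j,i) * (d i * y t $ j + y t $ i * d j))) (at t)"
proof -
  have position: "((\<lambda>t. y t $ i) has_real_derivative d i) (at t)" if "i < N" for i
    using d that by auto
  have momentum: "((\<lambda>t. y t $ (N+i)) has_real_derivative d (N+i)) (at t)" if "i < N" for i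
    using d that by auto
  have "((\<lambda>t. (y t $ (N+i))\<^sup>2) has_real_derivative 2 * (y t $ (N+i) * d (N+i))) (at t)"
    if "i < N" for i
    using DERIV_mult[OF momentum[OF that] momentum[OF that]]
    by (simp add: power2_eq_square mult.commute)
  moreover have "((\<lambda>t. V $$ (j,i) * y t $ i * y t $ j) has_real_derivative
      V $$ (j,i) * (d i * y t $ j + y t $ i * d j)) (at t)" if "i < N" "j < N" for i j
    using DERIV_mult[OF DERIV_cmult[OF position[OF that(1)], of "V $$ (j,i)"] position[OF that(2)]]
    by (simp add: algebra_simps)
  ultimately have "((\<lambda>t. (1/2) * (\<Sum>i<N. (y t $ (N+i))\<^sup>2)
        + (1/2) * (\<Sum>i<N. \<Sum>j<N. V $$ (j,i) * y t $ i * y t $ j))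
     has_real_derivative (1/2) * (\<Sum>i<N. 2 * (y t $ (N+i) * d (N+i)))
        + (1/2) * (\<Sum>i<N. \<Sum>j<N. V $$ (j,i) * (d i * y t $ j + y t $ i * d j))) (at t)"
    by (intro DERIV_add DERIV_cmult DERIV_sum) auto
  thus ?thesis unfolding energy_def by (simp add: sum_distrib_left[symmetric])
qed

text \<open>Along the flow only the damped momenta dissipate energy: the conservative terms cancel
  by the symmetry of \<open>V\<close>.\<close>

lemma energy_derivative_sys_mat:
  fixes m :: nat and \<alpha> :: real
  assumes V: "V \<in> carrier_mat N N" and sym: "transpose_mat V = V" and y: "y \<in> carrier_vec (2*N)"
  defines "d \<equiv> \<lambda>i. (sys_mat N m \<alpha> V *\<^sub>v y) $ i"
  shows "(\<Sum>i<N. y $ (N+i) * d (N+i)) + (1/2) * (\<Sum>i<N. \<Sum>j<N. V $$ (j,i) * (d i * y $ j + y $ i * d j))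
       = - \<alpha> * (\<Sum>i<N. (if N - m \<le> i then 1 else 0) * (y $ (N+i))\<^sup>2)"
proof -
  have V_sym: "V $$ (j,i) = V $$ (i,j)" if "i < N" "j < N" for i j
    using V that by (metis carrier_matD index_transpose_mat(1) sym)
  have d_position: "d i = y $ (N+i)" if "i < N" for i
    unfolding d_def using sys_mat_mult_vec_position[OF V y that] .
  have d_momentum: "d (N+i) = - (\<Sum>j<N. V $$ (i,j) * y $ j) - \<alpha> * (if N - m \<le> i then 1 else 0) * y $ (N+i)"
    if "i < N" for i
    unfolding d_def using sys_mat_mult_vec_momentum[OF V y that] .
  define W where "W = (\<Sum>i<N. \<Sum>j<N. V $$ (i,j) * y $ (N+i) * y $ j)"
  have "(\<Sum>i<N. \<Sum>j<N. V $$ (j,i) * (d i * y $ j + y $ i * d j))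
      = (\<Sum>i<N. \<Sum>j<N. V $$ (j,i) * d i * y $ j) + (\<Sum>i<N. \<Sum>j<N. V $$ (j,i) * y $ i * d j)"
    by (simp add: sum.distrib[symmetric] algebra_simps)
  also have "(\<Sum>i<N. \<Sum>j<N. V $$ (j,i) * y $ i * d j) = (\<Sum>j<N. \<Sum>i<N. V $$ (j,i) * y $ i * d j)"
    by (rule sum.swap)
  also have "(\<Sum>i<N. \<Sum>j<N. V $$ (j,i) * d i * y $ j) = W"
    unfolding W_def by (intro sum.cong refl) (simp add: V_sym d_position)
  also have "(\<Sum>j<N. \<Sum>i<N. V $$ (j,i) * y $ i * d j) = W"
    unfolding W_def by (intro sum.cong refl) (simp add: d_position mult_ac)
  finally have potential: "(\<Sum>i<N. \<Sum>j<N. V $$ (j,i) * (d i * y $ j + y $ i * d j)) = 2 * W"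
    by simp
  have "(\<Sum>i<N. y $ (N+i) * d (N+i))
     = (\<Sum>i<N. - (\<Sum>j<N. V $$ (i,j) * y $ (N+i) * y $ j)
                - \<alpha> * ((if N - m \<le> i then 1 else 0) * (y $ (N+i))\<^sup>2))"
  proof (intro sum.cong refl)
    fix i assume "i \<in> {..<N}"
    thus "y $ (N+i) * d (N+i) = - (\<Sum>j<N. V $$ (i,j) * y $ (N+i) * y $ j)
        - \<alpha> * ((if N - m \<le> i then 1 else 0) * (y $ (N+i))\<^sup>2)"
      by (simp add: d_momentum algebra_simps power2_eq_square sum_distrib_left)
  qed
  also have "\<dots> = - W - \<alpha> * (\<Sum>i<N. (if N - m \<le> i then 1 else 0) * (y $ (N+i))\<^sup>2)"
    unfolding W_def by (simp add: sum_subtractf sum_negf sum_distrib_left)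
  finally show ?thesis using potential by simp
qed

definition energy_gram :: "nat \<Rightarrow> real mat \<Rightarrow> nat \<Rightarrow> nat \<Rightarrow> real" where
  "energy_gram N V a b = (if a < N \<and> b < N then V $$ (b,a) / 2 else if N \<le> a \<and> a = b then 1/2 else 0)"

lemma energy_eq_quad_form: "energy N V \<psi> = quad_form (2*N) (energy_gram N V) \<psi>"
proof -
  let ?G = "energy_gram N V"
  have "quad_form (2*N) ?G \<psi>
      = (\<Sum>a<N. \<Sum>b<N. \<psi> $ a * \<psi> $ b * ?G a b) + (\<Sum>a<N. \<Sum>b<N. \<psi> $ (N+a) * \<psi> $ b * ?G (N+a) b)
      + ((\<Sum>a<N. \<Sum>b<N. \<psi> $ a * \<psi> $ (N+b) * ?G a (N+b))
         + (\<Sum>a<N. \<Sum>b<N. \<psi> $ (N+a) * \<psi> $ (N+b) * ?G (N+a) (N+b)))"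
    unfolding quad_form_def sum_lessThan_double sum.distrib ..
  also have "(\<Sum>a<N. \<Sum>b<N. \<psi> $ a * \<psi> $ b * ?G a b) = (1/2) * (\<Sum>i<N. \<Sum>j<N. V $$ (j,i) * \<psi> $ i * \<psi> $ j)"
    unfolding sum_distrib_left by (intro sum.cong refl) (simp add: energy_gram_def)
  also have "(\<Sum>a<N. \<Sum>b<N. \<psi> $ a * \<psi> $ (N+b) * ?G a (N+b)) = 0"
    by (auto simp: energy_gram_def intro!: sum.neutral)
  also have "(\<Sum>a<N. \<Sum>b<N. \<psi> $ (N+a) * \<psi> $ b * ?G (N+a) b) = 0"
    by (auto simp: energy_gram_def intro!: sum.neutral)
  also have "(\<Sum>a<N. \<Sum>b<N. \<psi> $ (N+a) * \<psi> $ (N+b) * ?G (N+a) (N+b)) = (1/2) * (\<Sum>i<N. (\<psi> $ (N+i))\<^sup>2)"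
    unfolding sum_distrib_left
    by (intro sum.cong refl) (simp add: energy_gram_def power2_eq_square if_distrib[of "\<lambda>x. _ * x"] cong: if_cong)
  finally show ?thesis unfolding energy_def by simp
qed

lemma energy_upper_bound:
  obtains C where "\<And>\<psi>. (\<Sum>k<2*N. (\<psi> $ k)\<^sup>2) \<le> 1 \<Longrightarrow> energy N V \<psi> \<le> C"
proof (rule that)
  fix \<psi> :: "real vec" assume norm: "(\<Sum>k<2*N. (\<psi> $ k)\<^sup>2) \<le> 1"
  have "energy N V \<psi> \<le> (2*N) * (1/2 + (\<Sum>a<2*N. \<Sum>b<2*N. \<bar>energy_gram N V a b\<bar>)) * (\<Sum>k<2*N. (\<psi> $ k)\<^sup>2)"
    unfolding energy_eq_quad_form
  proof (rule quad_form_le_of_coeff_bound)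
    fix a b assume "a < 2*N" "b < 2*N"
    hence "\<bar>energy_gram N V a b\<bar> \<le> (\<Sum>a<2*N. \<Sum>b<2*N. \<bar>energy_gram N V a b\<bar>)"
      using member_le_sum[of a "{..<2*N}" "\<lambda>a. \<Sum>b<2*N. \<bar>energy_gram N V a b\<bar>"]
        member_le_sum[of b "{..<2*N}" "\<lambda>b. \<bar>energy_gram N V a b\<bar>"]
      by (simp add: sum_nonneg)
    thus "\<bar>energy_gram N V a b\<bar> \<le> 1/2 + (\<Sum>a<2*N. \<Sum>b<2*N. \<bar>energy_gram N V a b\<bar>)" by simp
  qed
  also have "\<dots> \<le> (2*N) * (1/2 + (\<Sum>a<2*N. \<Sum>b<2*N. \<bar>energy_gram N V a b\<bar>))"
    using norm by (intro mult_left_le mult_nonneg_nonneg add_nonneg_nonneg sum_nonneg) auto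
  finally show "energy N V \<psi> \<le> (2*N) * (1/2 + (\<Sum>a<2*N. \<Sum>b<2*N. \<bar>energy_gram N V a b\<bar>))" .
qed

section \<open>The energy-decaying subspace\<close>

locale damped_oscillator =
  fixes N m :: nat and \<alpha> :: real and V :: "real mat"
  assumes N_pos: "1 \<le> N" and damping_nonneg: "0 \<le> \<alpha>" and V_posdef: "symmetric_posdef N V"
begin

abbreviation A :: "real mat" where "A \<equiv> sys_mat N m \<alpha> V"

lemma V_carrier: "V \<in> carrier_mat N N" and V_symmetric: "transpose_mat V = V"
  using V_posdef unfolding symmetric_posdef_def by auto

lemma A_carrier: "A \<in> carrier_mat (2*N) (2*N)"
  using sys_mat_carrier[OF V_carrier] .

lemma flow_carrier: "\<psi> \<in> carrier_vec (2*N) \<Longrightarrow> mat_exp A t *\<^sub>v \<psi> \<in> carrier_vec (2*N)"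
  using A_carrier by (intro mult_mat_vec_carrier[of _ "2*N" "2*N"]) auto

lemma energy_lower_bound:
  obtains \<mu> where "\<mu> > 0" "\<And>\<psi>. \<mu> * (\<Sum>k<2*N. (\<psi> $ k)\<^sup>2) \<le> energy N V \<psi>"
proof -
  obtain \<mu> where \<mu>: "\<mu> > 0"
    "\<And>x. x \<in> carrier_vec N \<Longrightarrow> \<mu> * (\<Sum>i<N. (x $ i)\<^sup>2) \<le> (\<Sum>i<N. \<Sum>j<N. x $ i * V $$ (i,j) * x $ j)"
    using symmetric_posdef_lower_bound[OF V_posdef N_pos] by blast
  show thesis
  proof (rule that[of "min \<mu> 1 / 2"])
    fix \<psi> :: "real vec"
    have "(\<Sum>i<N. \<Sum>j<N. V $$ (j,i) * \<psi> $ i * \<psi> $ j)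
        = (\<Sum>j<N. \<Sum>i<N. vec N (\<lambda>i. \<psi> $ i) $ j * V $$ (j,i) * vec N (\<lambda>i. \<psi> $ i) $ i)"
      by (subst sum.swap) (intro sum.cong refl, simp add: mult_ac)
    hence "\<mu> * (\<Sum>i<N. (\<psi> $ i)\<^sup>2) \<le> (\<Sum>i<N. \<Sum>j<N. V $$ (j,i) * \<psi> $ i * \<psi> $ j)"
      using \<mu>(2)[of "vec N (\<lambda>i. \<psi> $ i)"] by simp
    moreover have "min \<mu> 1 * (\<Sum>i<N. (\<psi> $ i)\<^sup>2) \<le> \<mu> * (\<Sum>i<N. (\<psi> $ i)\<^sup>2)"
      "min \<mu> 1 * (\<Sum>i<N. (\<psi> $ (N+i))\<^sup>2) \<le> 1 * (\<Sum>i<N. (\<psi> $ (N+i))\<^sup>2)"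
      by (intro mult_right_mono sum_nonneg; simp)+
    moreover have "min \<mu> 1 / 2 * (\<Sum>k<2*N. (\<psi> $ k)\<^sup>2)
        = min \<mu> 1 * (\<Sum>i<N. (\<psi> $ i)\<^sup>2) / 2 + min \<mu> 1 * (\<Sum>i<N. (\<psi> $ (N+i))\<^sup>2) / 2"
      unfolding sum_lessThan_double by (simp add: algebra_simps)
    ultimately show "min \<mu> 1 / 2 * (\<Sum>k<2*N. (\<psi> $ k)\<^sup>2) \<le> energy N V \<psi>"
      unfolding energy_def by linarith
  qed (use \<mu>(1) in simp)
qed

lemma energy_flow_antimono:
  assumes \<psi>: "\<psi> \<in> carrier_vec (2*N)" and "s \<le> t"
  shows "energy N V (mat_exp A t *\<^sub>v \<psi>) \<le> energy N V (mat_exp A s *\<^sub>v \<psi>)"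
proof (rule DERIV_nonpos_imp_nonincreasing[OF \<open>s \<le> t\<close>])
  fix x :: real
  define y where "y = mat_exp A x *\<^sub>v \<psi>"
  have "((\<lambda>t. energy N V (mat_exp A t *\<^sub>v \<psi>)) has_real_derivative
     (\<Sum>i<N. y $ (N+i) * (A *\<^sub>v y) $ (N+i))
     + (1/2) * (\<Sum>i<N. \<Sum>j<N. V $$ (j,i) * ((A *\<^sub>v y) $ i * y $ j + y $ i * (A *\<^sub>v y) $ j))) (at x)"
    unfolding y_def
    by (rule has_real_derivative_energy, rule has_real_derivative_mat_exp_mult_vec[OF A_carrier \<psi>])
  moreover have "- \<alpha> * (\<Sum>i<N. (if N - m \<le> i then 1 else 0) * (y $ (N+i))\<^sup>2) \<le> 0"
    using damping_nonneg by (intro mult_nonpos_nonneg sum_nonneg) auto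
  ultimately show "\<exists>D. ((\<lambda>t. energy N V (mat_exp A t *\<^sub>v \<psi>)) has_real_derivative D) (at x) \<and> D \<le> 0"
    using energy_derivative_sys_mat[OF V_carrier V_symmetric flow_carrier[OF \<psi>]] unfolding y_def
    by auto
qed

lemma mem_L_minus_iff:
  "\<psi> \<in> L_minus N m \<alpha> V \<longleftrightarrow>
     \<psi> \<in> carrier_vec (2*N) \<and> ((\<lambda>t. energy N V (mat_exp A t *\<^sub>v \<psi>)) \<longlongrightarrow> 0) at_top"
  unfolding L_minus_def using exp_mat_vec_eq_mat_exp[OF A_carrier] by auto

lemma L_minus_flow_invariant:
  assumes "\<psi> \<in> L_minus N m \<alpha> V"
  shows "mat_exp A s *\<^sub>v \<psi> \<in> L_minus N m \<alpha> V"
proof -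
  have \<psi>: "\<psi> \<in> carrier_vec (2*N)" and lim: "((\<lambda>t. energy N V (mat_exp A t *\<^sub>v \<psi>)) \<longlongrightarrow> 0) at_top"
    using assms mem_L_minus_iff by auto
  have "filterlim (\<lambda>t. s + t) at_top at_top"
    by (rule filterlim_tendsto_add_at_top[OF tendsto_const filterlim_ident])
  with lim have "((\<lambda>t. energy N V (mat_exp A (s + t) *\<^sub>v \<psi>)) \<longlongrightarrow> 0) at_top"
    by (rule filterlim_compose)
  thus ?thesis
    using mem_L_minus_iff flow_carrier[OF \<psi>] mat_exp_add_mult_vec[OF A_carrier \<psi>]
    by (simp add: add.commute)
qed

lemma energy_nonneg: "0 \<le> energy N V \<psi>"
proof -
  obtain \<mu> where "\<mu> > 0" "\<mu> * (\<Sum>k<2*N. (\<psi> $ k)\<^sup>2) \<le> energy N V \<psi>"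
    using energy_lower_bound by metis
  moreover have "0 \<le> \<mu> * (\<Sum>k<2*N. (\<psi> $ k)\<^sup>2)"
    using \<open>\<mu> > 0\<close> by (intro mult_nonneg_nonneg sum_nonneg) auto
  ultimately show ?thesis by linarith
qed

lemma energy_flow_contraction:
  obtains T where "T > 0"
    "\<And>\<psi>. \<psi> \<in> L_minus N m \<alpha> V \<Longrightarrow> energy N V (mat_exp A T *\<^sub>v \<psi>) \<le> exp (-1) * energy N V \<psi>"
proof -
  obtain \<mu> where \<mu>: "\<mu> > 0"
    "\<And>\<psi>. \<mu> * (\<Sum>k<2*N. (\<psi> $ k)\<^sup>2) \<le> energy N V \<psi>"
    using energy_lower_bound by blast
  define K where "K t k l = (\<Sum>a<2*N. \<Sum>b<2*N.
      mat_exp A t $$ (a,k) * mat_exp A t $$ (b,l) * energy_gram N V a b)" for t k l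
  have energy_flow: "energy N V (mat_exp A t *\<^sub>v \<psi>) = quad_form (2*N) (K t) \<psi>"
    if "\<psi> \<in> carrier_vec (2*N)" for t \<psi>
    unfolding K_def energy_eq_quad_form using A_carrier that by (intro quad_form_mult_mat_vec) auto
  have "\<exists>L. ((\<lambda>t. quad_form (2*N) (K t) \<psi>) \<longlongrightarrow> L) at_top" if \<psi>: "\<psi> \<in> carrier_vec (2*N)" for \<psi>
    unfolding energy_flow[OF \<psi>, symmetric]
    by (rule antimono_convergent_at_top[where b=0])
       (use energy_flow_antimono[OF \<psi>] energy_nonneg in auto)
  then obtain T0 where T0: "\<And>t \<psi>. T0 \<le> t \<Longrightarrow> \<psi> \<in> carrier_vec (2*N) \<Longrightarrow>
      ((\<lambda>t. quad_form (2*N) (K t) \<psi>) \<longlongrightarrow> 0) at_top \<Longrightarrow>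
      quad_form (2*N) (K t) \<psi> \<le> \<mu> * exp (-1) * (\<Sum>k<2*N. (\<psi> $ k)\<^sup>2)"
    using quad_form_eventually_small[of "2*N" K "\<mu> * exp (-1)"] \<mu>(1) by auto
  show thesis
  proof (rule that[of "max T0 1"])
    fix \<psi> assume "\<psi> \<in> L_minus N m \<alpha> V"
    hence \<psi>: "\<psi> \<in> carrier_vec (2*N)" and "((\<lambda>t. quad_form (2*N) (K t) \<psi>) \<longlongrightarrow> 0) at_top"
      using mem_L_minus_iff energy_flow by auto
    hence "energy N V (mat_exp A (max T0 1) *\<^sub>v \<psi>) \<le> exp (-1) * (\<mu> * (\<Sum>k<2*N. (\<psi> $ k)\<^sup>2))"
      using T0[of "max T0 1" \<psi>] energy_flow[OF \<psi>] by (simp add: mult_ac)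
    also have "\<dots> \<le> exp (-1) * energy N V \<psi>" using \<mu>(2)[of \<psi>] by simp
    finally show "energy N V (mat_exp A (max T0 1) *\<^sub>v \<psi>) \<le> exp (-1) * energy N V \<psi>" .
  qed simp
qed

lemma energy_flow_exp_decay:
  obtains T where "T > 0" "\<And>\<psi> t. \<psi> \<in> L_minus N m \<alpha> V \<Longrightarrow> 0 \<le> t \<Longrightarrow>
    energy N V (mat_exp A t *\<^sub>v \<psi>) \<le> exp 1 * energy N V \<psi> * exp (- t / T)"
proof -
  obtain T where T: "T > 0"
    "\<And>\<psi>. \<psi> \<in> L_minus N m \<alpha> V \<Longrightarrow> energy N V (mat_exp A T *\<^sub>v \<psi>) \<le> exp (-1) * energy N V \<psi>"
    using energy_flow_contraction by blast
  show thesis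
  proof (rule that[OF T(1)])
    fix \<psi> and t :: real assume \<psi>L: "\<psi> \<in> L_minus N m \<alpha> V" and "0 \<le> t"
    hence \<psi>: "\<psi> \<in> carrier_vec (2*N)" using mem_L_minus_iff by blast
    have "energy N V (mat_exp A (s + T) *\<^sub>v \<psi>) \<le> exp (-1) * energy N V (mat_exp A s *\<^sub>v \<psi>)" for s :: real
      using T(2)[OF L_minus_flow_invariant[OF \<psi>L, of s]] mat_exp_add_mult_vec[OF A_carrier \<psi>, of T s]
      by (simp add: add.commute)
    with \<open>0 \<le> t\<close> T(1) energy_flow_antimono[OF \<psi>] energy_nonneg
    have "energy N V (mat_exp A t *\<^sub>v \<psi>) \<le> exp 1 * energy N V (mat_exp A 0 *\<^sub>v \<psi>) * exp (- t / T)"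
      by (intro exp_decay_of_periodic_contraction) auto
    thus "energy N V (mat_exp A t *\<^sub>v \<psi>) \<le> exp 1 * energy N V \<psi> * exp (- t / T)"
      using \<psi> by (simp add: mat_exp_zero[OF A_carrier])
  qed
qed

lemma flow_norm_exp_decay:
  obtains \<beta> C where "\<beta> > 0" "\<And>\<psi> t. \<psi> \<in> L_minus N m \<alpha> V \<Longrightarrow> eucl_norm \<psi> \<le> 1 \<Longrightarrow> 0 \<le> t \<Longrightarrow>
    eucl_norm (exp_mat_vec A t \<psi>) \<le> C * exp (- \<beta> * t)"
proof -
  obtain \<mu> where \<mu>: "\<mu> > 0"
    "\<And>\<psi>. \<mu> * (\<Sum>k<2*N. (\<psi> $ k)\<^sup>2) \<le> energy N V \<psi>"
    using energy_lower_bound by blast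
  obtain E where E: "\<And>\<psi>. (\<Sum>k<2*N. (\<psi> $ k)\<^sup>2) \<le> 1 \<Longrightarrow> energy N V \<psi> \<le> E"
    using energy_upper_bound by blast
  obtain T where T: "T > 0" "\<And>\<psi> t. \<psi> \<in> L_minus N m \<alpha> V \<Longrightarrow> 0 \<le> t \<Longrightarrow>
      energy N V (mat_exp A t *\<^sub>v \<psi>) \<le> exp 1 * energy N V \<psi> * exp (- t / T)"
    using energy_flow_exp_decay by blast
  show thesis
  proof (rule that[of "1 / (2 * T)" "sqrt (exp 1 * E / \<mu>)"])
    fix \<psi> and t :: real assume \<psi>L: "\<psi> \<in> L_minus N m \<alpha> V" and norm: "eucl_norm \<psi> \<le> 1" and t: "0 \<le> t"
    hence \<psi>: "\<psi> \<in> carrier_vec (2*N)" using mem_L_minus_iff by blast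
    define y where "y = mat_exp A t *\<^sub>v \<psi>"
    have "(\<Sum>k<2*N. (\<psi> $ k)\<^sup>2) \<le> 1"
      using norm \<psi> unfolding eucl_norm_def by simp
    have "\<mu> * (\<Sum>k<2*N. (y $ k)\<^sup>2) \<le> energy N V y"
      unfolding y_def by (rule \<mu>(2))
    also have "\<dots> \<le> exp 1 * energy N V \<psi> * exp (- t / T)"
      unfolding y_def by (rule T(2)[OF \<psi>L t])
    also have "\<dots> \<le> exp 1 * E * exp (- t / T)"
      by (intro mult_right_mono mult_left_mono E) (use \<open>(\<Sum>k<2*N. (\<psi> $ k)\<^sup>2) \<le> 1\<close> in auto)
    also have "\<dots> = \<mu> * (exp 1 * E / \<mu> * (exp (- (1 / (2 * T)) * t))\<^sup>2)"
      using \<mu>(1) T(1) by (simp add: power2_eq_square exp_add[symmetric])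
    finally have "(\<Sum>k<2*N. (y $ k)\<^sup>2) \<le> exp 1 * E / \<mu> * (exp (- (1 / (2 * T)) * t))\<^sup>2"
      using \<mu>(1) by (simp add: pos_le_divide_eq mult.commute)
    hence "sqrt (\<Sum>k<2*N. (y $ k)\<^sup>2) \<le> sqrt (exp 1 * E / \<mu> * (exp (- (1 / (2 * T)) * t))\<^sup>2)"
      by (rule real_sqrt_le_mono)
    also have "\<dots> = sqrt (exp 1 * E / \<mu>) * exp (- (1 / (2 * T)) * t)"
      by (simp only: real_sqrt_mult real_sqrt_abs abs_exp_cancel)
    finally have "sqrt (\<Sum>k<2*N. (y $ k)\<^sup>2) \<le> sqrt (exp 1 * E / \<mu>) * exp (- (1 / (2 * T)) * t)" .
    moreover have "exp_mat_vec A t \<psi> = y"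
      unfolding y_def by (rule exp_mat_vec_eq_mat_exp[OF A_carrier \<psi>])
    moreover have "y \<in> carrier_vec (2*N)"
      unfolding y_def by (rule flow_carrier[OF \<psi>])
    ultimately show "eucl_norm (exp_mat_vec A t \<psi>) \<le> sqrt (exp 1 * E / \<mu>) * exp (- (1 / (2 * T)) * t)"
      unfolding eucl_norm_def by simp
  qed (use T(1) in simp)
qed

lemma zero_mem_L_minus: "0\<^sub>v (2*N) \<in> L_minus N m \<alpha> V"
proof -
  have "mat_exp A t *\<^sub>v 0\<^sub>v (2*N) = 0\<^sub>v (2*N)" for t
  proof (rule eq_vecI)
    fix i assume "i < dim_vec (0\<^sub>v (2*N) :: real vec)"
    thus "(mat_exp A t *\<^sub>v 0\<^sub>v (2*N)) $ i = 0\<^sub>v (2*N) $ i"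
      using A_carrier by (subst index_mult_mat_vec_sum[of _ "2*N"]) auto
  qed (use A_carrier in simp)
  moreover have "energy N V (0\<^sub>v (2*N)) = 0"
    unfolding energy_def by simp
  ultimately show ?thesis
    unfolding mem_L_minus_iff by simp
qed

lemma restr_exp_norm_exp_decay:
  "\<exists>C \<beta>. \<beta> > 0 \<and> (\<forall>t \<ge> 0. restr_exp_norm A (L_minus N m \<alpha> V) t \<le> C * exp (- \<beta> * t))"
proof -
  obtain \<beta> C where "\<beta> > 0" and decay: "\<And>\<psi> t. \<psi> \<in> L_minus N m \<alpha> V \<Longrightarrow> eucl_norm \<psi> \<le> 1 \<Longrightarrow> 0 \<le> t \<Longrightarrow>
      eucl_norm (exp_mat_vec A t \<psi>) \<le> C * exp (- \<beta> * t)"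
    using flow_norm_exp_decay by metis
  note zero_mem_L_minus
  moreover have "eucl_norm (0\<^sub>v (2*N)) \<le> 1"
    unfolding eucl_norm_def by simp
  ultimately have "restr_exp_norm A (L_minus N m \<alpha> V) t \<le> C * exp (- \<beta> * t)" if "0 \<le> t" for t
    unfolding restr_exp_norm_def using decay[OF _ _ that] by (intro cSup_least) blast+
  with \<open>\<beta> > 0\<close> show ?thesis by blast
qed

lemma L_minus_flow_tendsto_zero:
  assumes "\<psi> \<in> L_minus N m \<alpha> V"
  shows "((\<lambda>t. \<Sum>k<2*N. (exp_mat_vec A t \<psi> $ k)\<^sup>2) \<longlongrightarrow> 0) at_top"
proof -
  obtain \<mu> where \<mu>: "\<mu> > 0"
    "\<And>\<psi>. \<mu> * (\<Sum>k<2*N. (\<psi> $ k)\<^sup>2) \<le> energy N V \<psi>"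
    using energy_lower_bound by blast
  have \<psi>: "\<psi> \<in> carrier_vec (2*N)"
    and lim: "((\<lambda>t. energy N V (mat_exp A t *\<^sub>v \<psi>)) \<longlongrightarrow> 0) at_top"
    using assms mem_L_minus_iff by auto
  have "(\<Sum>k<2*N. ((mat_exp A t *\<^sub>v \<psi>) $ k)\<^sup>2) \<le> energy N V (mat_exp A t *\<^sub>v \<psi>) / \<mu>" for t
    using \<mu>(2)[of "mat_exp A t *\<^sub>v \<psi>"] by (simp only: pos_le_divide_eq[OF \<mu>(1)] mult.commute)
  hence "((\<lambda>t. \<Sum>k<2*N. ((mat_exp A t *\<^sub>v \<psi>) $ k)\<^sup>2) \<longlongrightarrow> 0) at_top"
    by (intro tendsto_sandwich[OF _ _ tendsto_const tendsto_divide_zero[OF lim, of \<mu>]]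
        always_eventually allI sum_nonneg) auto
  thus ?thesis unfolding exp_mat_vec_eq_mat_exp[OF A_carrier \<psi>] .
qed

lemma restr_spectrum_Re_neg:
  assumes "c \<in> restr_spectrum (2*N) A (L_minus N m \<alpha> V)"
  shows "Re c < 0"
proof (rule ccontr)
  assume "\<not> Re c < 0"
  obtain z where z: "z \<in> carrier_vec (2*N)" "z \<noteq> 0\<^sub>v (2*N)"
    and L: "vec (2*N) (\<lambda>i. Re (z $ i)) \<in> L_minus N m \<alpha> V" "vec (2*N) (\<lambda>i. Im (z $ i)) \<in> L_minus N m \<alpha> V"
    and "map_mat complex_of_real A *\<^sub>v z = c \<cdot>\<^sub>v z"
    using assms unfolding restr_spectrum_def by blast
  hence eigen: "eigenvector (map_mat complex_of_real A) z c"
    using A_carrier unfolding eigenvector_def by simp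
  define P where "P = (\<Sum>k<2*N. (cmod (z $ k))\<^sup>2)"
  obtain k where k: "k < 2*N" "z $ k \<noteq> 0"
  proof -
    have "\<not> (\<forall>k<2*N. z $ k = 0)"
      using z by (metis carrier_vecD eq_vecI index_zero_vec(1) index_zero_vec(2))
    thus thesis using that by blast
  qed
  have "0 < (cmod (z $ k))\<^sup>2" using k(2) by simp
  also have "\<dots> \<le> P"
    unfolding P_def using k(1) by (intro member_le_sum) auto
  finally have "P > 0" .
  let ?parts = "\<lambda>t. (\<Sum>k<2*N. (exp_mat_vec A t (vec (2*N) (\<lambda>i. Re (z $ i))) $ k)\<^sup>2)
                   + (\<Sum>k<2*N. (exp_mat_vec A t (vec (2*N) (\<lambda>i. Im (z $ i))) $ k)\<^sup>2)"
  have "P \<le> ?parts t" if "0 \<le> t" for t :: real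
  proof -
    have parts: "?parts t = (cmod (exp (c * t)))\<^sup>2 * P"
      unfolding P_def by (rule exp_mat_vec_eigenvector_sum_squares[OF A_carrier eigen])
    have "1 \<le> exp (Re c * t)"
      using \<open>\<not> Re c < 0\<close> that by simp
    hence "1 \<le> (cmod (exp (c * t)))\<^sup>2"
      by (simp add: one_le_power)
    hence "1 * P \<le> (cmod (exp (c * t)))\<^sup>2 * P"
      using \<open>P > 0\<close> by (intro mult_right_mono) auto
    thus ?thesis unfolding parts by simp
  qed
  hence "\<forall>\<^sub>F t in at_top. P \<le> ?parts t"
    using eventually_ge_at_top[of 0] by (rule eventually_mono[rotated])
  moreover have "(?parts \<longlongrightarrow> 0) at_top"
    using tendsto_add[OF L_minus_flow_tendsto_zero[OF L(1)] L_minus_flow_tendsto_zero[OF L(2)]] by simp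
  ultimately have "P \<le> 0"
    by (intro tendsto_lowerbound) auto
  with \<open>P > 0\<close> show False by simp
qed

end

theorem lemma2:
  fixes N m :: nat and \<alpha> :: real and V :: "real mat"
  assumes "1 \<le> N" and "1 \<le> m" and "m \<le> N" and "\<alpha> > 0"
    and "symmetric_posdef N V"
  shows "(\<forall>c \<in> restr_spectrum (2*N) (sys_mat N m \<alpha> V) (L_minus N m \<alpha> V). Re c < 0)
    \<and> (\<exists>C \<beta>. \<beta> > 0 \<and> (\<forall>t \<ge> 0.
         restr_exp_norm (sys_mat N m \<alpha> V) (L_minus N m \<alpha> V) t \<le> C * exp (- \<beta> * t)))"
proof -
  interpret damped_oscillator N m \<alpha> V
    using assms by unfold_locales auto
  show ?thesis using restr_spectrum_Re_neg restr_exp_norm_exp_decay by blast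
qed

end
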